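(* Let $(A,B)$ be a definite pencil. If $0<\epsilon<\gamma(A,B)$, then $$\Lambda^{\mathrm{sym}}_\epsilon(A,B)=\left\{z\in\mathbb{C}:\ \sigma_{\min}(A-zB)\le\epsilon\sqrt{1+|z|^2}\right\}\cap\mathbb{R}.$$
   Context: A pencil $(A,B)$ of $n\times n$ complex matrices is definite if $A,B$ are Hermitian and $\gamma(A,B)=\min_{\|x\|_2=1}|x^H(A+iB)x|>0$. For $\epsilon>0$, the symmetric $\epsilon$-pseudospectrum is $\Lambda^{\mathrm{sym}}_\epsilon(A,B)=\{z\in\mathbb{C}:(A+E)u=z(B+F)u$ for some $u\ne0$ and Hermitian $E,F$ with $\sqrt{\|E\|_2^2+\|F\|_2^2}\le\epsilon\}$. $\sigma_{\min}$ denotes the smallest singular value. *)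

theory Defs
  imports "HOL-Analysis.Analysis"
begin

text \<open>n x n complex matrices are represented as complex^'n^'n (n = CARD('n));
  vectors as complex^'n with the Euclidean (2-)norm.\<close>

definition hermitian :: "complex^'n^'n \<Rightarrow> bool" where
  "hermitian M \<longleftrightarrow> (\<forall>i j. M $ i $ j = cnj (M $ j $ i))"

definition qform :: "complex^'n^'n \<Rightarrow> complex^'n \<Rightarrow> complex" where
  "qform M x = (\<Sum>i\<in>UNIV. \<Sum>j\<in>UNIV. cnj (x $ i) * M $ i $ j * x $ j)"

definition cmat_scale :: "complex \<Rightarrow> complex^'n^'n \<Rightarrow> complex^'n^'n" where
  "cmat_scale z M = (\<chi> i j. z * M $ i $ j)"

definition crawford :: "complex^'n^'n \<Rightarrow> complex^'n^'n \<Rightarrow> real" where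
  "crawford A B = Inf {cmod (qform (A + cmat_scale \<i> B) x) | x. norm x = 1}"

definition definite_pencil :: "complex^'n^'n \<Rightarrow> complex^'n^'n \<Rightarrow> bool" where
  "definite_pencil A B \<longleftrightarrow> hermitian A \<and> hermitian B \<and> crawford A B > 0"

definition norm2 :: "complex^'n^'n \<Rightarrow> real" where
  "norm2 E = onorm (\<lambda>x. E *v x)"

definition sigma_min :: "complex^'n^'n \<Rightarrow> real" where
  "sigma_min M = Inf {norm (M *v x) | x. norm x = 1}"

definition sym_pseudospectrum :: "real \<Rightarrow> complex^'n^'n \<Rightarrow> complex^'n^'n \<Rightarrow> complex set" where
  "sym_pseudospectrum \<epsilon> A B = {z. \<exists>E F u. u \<noteq> 0 \<and> hermitian E \<and> hermitian F \<and>
      sqrt ((norm2 E)\<^sup>2 + (norm2 F)\<^sup>2) \<le> \<epsilon> \<and>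
      (A + E) *v u = cmat_scale z (B + F) *v u}"

end

theory Submission
  imports Defs
begin

text \<open>If \<open>(A + E) u = z (B + F) u\<close> with Hermitian \<open>E\<close>, \<open>F\<close> and \<open>\<parallel>u\<parallel> = 1\<close>, then
  \<open>a = u\<^sup>H (A + E) u\<close> and \<open>b = u\<^sup>H (B + F) u\<close> are real with \<open>a = z b\<close>. As \<open>a + \<i> b\<close> differs
  from \<open>u\<^sup>H (A + \<i> B) u\<close> by at most \<open>\<surd>(\<parallel>E\<parallel>\<^sup>2 + \<parallel>F\<parallel>\<^sup>2) < \<gamma>(A, B)\<close>, it is nonzero, so
  \<open>b \<noteq> 0\<close> and \<open>z = a / b\<close> is real; and \<open>(A - z B) u = z F u - E u\<close> has norm at most
  \<open>\<epsilon> \<surd>(1 + |z|\<^sup>2)\<close> by Cauchy-Schwarz.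
  Conversely, for real \<open>z = r\<close> the matrix \<open>A - r B\<close> is Hermitian, so it has a unit eigenvector
  \<open>x\<close> whose eigenvalue \<open>\<lambda>\<close> satisfies \<open>|\<lambda>| = \<sigma>\<^sub>m\<^sub>i\<^sub>n(A - r B)\<close>. With \<open>c = \<lambda> / (1 + r\<^sup>2)\<close>,
  the rank-one perturbations \<open>E = -c x x\<^sup>H\<close>, \<open>F = r c x x\<^sup>H\<close> make \<open>x\<close> an eigenvector of the
  perturbed pencil for \<open>r\<close>, at cost \<open>|c| \<surd>(1 + r\<^sup>2) = |\<lambda>| / \<surd>(1 + r\<^sup>2)\<close>.\<close>

lemma cmat_scale_mult_vector: "cmat_scale z M *v x = z *s (M *v x)"
  by (simp add: vec_eq_iff cmat_scale_def matrix_vector_mult_def sum_distrib_left mult.assoc)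

lemma norm_vector_smult: "norm (z *s v) = cmod z * norm (v::complex^'n)"
  by (simp add: norm_vec_def norm_mult L2_set_right_distrib)

lemma norm_mult_vector_le_norm2: "norm (M *v x) \<le> norm2 M * norm x"
  unfolding norm2_def by (rule onorm) simp

lemma norm2_nonneg: "0 \<le> norm2 M"
  unfolding norm2_def by (rule onorm_pos_le) simp

lemma norm2_cmat_scale_le: "norm2 (cmat_scale z M) \<le> cmod z * norm2 M"
  unfolding norm2_def[of "cmat_scale z M"]
proof (rule onorm_le)
  fix x
  have "norm (cmat_scale z M *v x) = cmod z * norm (M *v x)"
    by (simp add: cmat_scale_mult_vector norm_vector_smult)
  also have "\<dots> \<le> cmod z * (norm2 M * norm x)"
    by (simp add: mult_left_mono norm_mult_vector_le_norm2)
  finally show "norm (cmat_scale z M *v x) \<le> cmod z * norm2 M * norm x"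
    by (simp add: mult.assoc)
qed

lemma hermitian_iff: "hermitian M \<longleftrightarrow> (\<forall>i j. cnj (M$i$j) = M$j$i)"
  unfolding hermitian_def by metis

lemma hermitian_add: "hermitian M \<Longrightarrow> hermitian N \<Longrightarrow> hermitian (M + N)"
  by (simp add: hermitian_iff)

lemma hermitian_diff: "hermitian M \<Longrightarrow> hermitian N \<Longrightarrow> hermitian (M - N)"
  by (simp add: hermitian_iff)

lemma hermitian_cmat_scale_real: "hermitian M \<Longrightarrow> hermitian (cmat_scale (of_real r) M)"
  by (simp add: hermitian_iff cmat_scale_def)

lemma inner_vec_complex: "inner (x::complex^'n) y = (\<Sum>i\<in>UNIV. Re (x$i * cnj (y$i)))"
  by (simp add: inner_vec_def inner_complex_def)

lemma hermitian_inner_mult_vector: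
  assumes "hermitian M"
  shows "inner (M *v x) y = inner x (M *v y)"
proof -
  have M: "cnj (M$j$i) = M$i$j" for i j
    using assms by (simp add: hermitian_iff)
  have "inner (M *v x) y = (\<Sum>i\<in>UNIV. \<Sum>j\<in>UNIV. Re (M$i$j * x$j * cnj (y$i)))"
    by (simp add: inner_vec_complex matrix_vector_mult_def sum_distrib_right)
  also have "\<dots> = (\<Sum>j\<in>UNIV. \<Sum>i\<in>UNIV. Re (M$i$j * x$j * cnj (y$i)))"
    by (rule sum.swap)
  also have "\<dots> = (\<Sum>j\<in>UNIV. \<Sum>i\<in>UNIV. Re (x$j * cnj (M$j$i * y$i)))"
    by (simp add: M mult.commute mult.left_commute)
  also have "\<dots> = inner x (M *v y)"
    by (simp add: inner_vec_complex matrix_vector_mult_def sum_distrib_left)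
  finally show ?thesis .
qed

lemma qform_eq_sum: "qform M x = (\<Sum>i\<in>UNIV. cnj (x$i) * (M *v x)$i)"
  by (simp add: qform_def matrix_vector_mult_def sum_distrib_left mult.assoc)

lemma qform_add: "qform (M + N) x = qform M x + qform N x"
  by (simp add: qform_def distrib_left distrib_right sum.distrib)

lemma qform_cmat_scale: "qform (cmat_scale z M) x = z * qform M x"
  by (simp add: qform_def cmat_scale_def sum_distrib_left mult.assoc mult.left_commute)

lemma qform_hermitian:
  assumes "hermitian M"
  shows "qform M x = of_real (inner (M *v x) x)"
proof -
  have M: "cnj (M$i$j) = M$j$i" for i j
    using assms by (simp add: hermitian_iff)
  have "cnj (qform M x) = (\<Sum>i\<in>UNIV. \<Sum>j\<in>UNIV. cnj (x$j) * M$j$i * x$i)"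
    unfolding qform_def by (simp add: M mult.commute mult.left_commute)
  also have "\<dots> = qform M x"
    unfolding qform_def by (rule sum.swap)
  finally have "Im (qform M x) = 0"
    by (metis cnj.simps(2) neg_equal_zero)
  moreover have "Re (qform M x) = inner (M *v x) x"
    by (simp add: qform_eq_sum inner_vec_def inner_complex_def algebra_simps)
  ultimately show ?thesis
    by (simp add: complex_eq_iff)
qed

lemma abs_inner_mult_vector_le_norm2:
  assumes "norm x = 1"
  shows "\<bar>inner (M *v x) x\<bar> \<le> norm2 M"
proof -
  have "\<bar>inner (M *v x) x\<bar> \<le> norm (M *v x) * norm x"
    by (rule Cauchy_Schwarz_ineq2)
  also have "\<dots> \<le> norm2 M"
    using norm_mult_vector_le_norm2[of M x] assms by simp
  finally show ?thesis .
qed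

lemma sigma_min_le: "norm x = 1 \<Longrightarrow> sigma_min M \<le> norm (M *v x)"
  unfolding sigma_min_def by (rule cInf_lower) (auto intro!: bdd_belowI[of _ 0])

lemma sigma_min_attained: "\<exists>x. norm x = 1 \<and> norm (M *v x) = sigma_min M"
proof -
  have "axis undefined 1 \<in> sphere (0::complex^'n) 1"
    by simp
  moreover have "continuous_on (sphere 0 1) (\<lambda>x. norm (M *v x))"
    by (intro continuous_intros linear_continuous_on) simp
  ultimately obtain x where x: "x \<in> sphere 0 1"
    and min: "\<forall>y\<in>sphere 0 1. norm (M *v x) \<le> norm (M *v y)"
    using continuous_attains_inf[OF compact_sphere] by blast
  have "norm (M *v x) \<le> sigma_min M"
    unfolding sigma_min_def by (rule cInf_greatest) (use min x in auto)
  with x sigma_min_le[of x M] show ?thesis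
    by auto
qed

lemma sigma_min_mult_norm_le: "sigma_min M * norm u \<le> norm (M *v u)"
proof (cases "u = 0")
  case False
  have "sigma_min M \<le> norm (M *v ((1 / norm u) *\<^sub>R u))"
    by (rule sigma_min_le) (use False in simp)
  also have "\<dots> = norm (M *v u) / norm u"
    by (simp add: linear_scale)
  finally show ?thesis
    using False by (simp add: field_simps)
qed simp

lemma linear_coeff_zero_if_quadratic_nonneg:
  fixes b c :: real
  assumes nonneg: "\<And>t. 0 \<le> 2 * t * b + t\<^sup>2 * c"
  shows "b = 0"
proof (rule ccontr)
  assume "b \<noteq> 0"
  define d where "d = \<bar>c\<bar> + 1"
  have d: "d > 0" "c \<le> d - 1"
    unfolding d_def by auto
  have "d\<^sup>2 * (2 * (- b / d) * b + (- b / d)\<^sup>2 * c) = b\<^sup>2 * (c - 2 * d)"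
    using d by (simp add: field_simps power2_eq_square)
  also have "\<dots> < 0"
    using \<open>b \<noteq> 0\<close> d by (intro mult_pos_neg) auto
  finally show False
    using nonneg[of "- b / d"] d by (simp add: mult_less_0_iff)
qed

text \<open>The nonnegative form \<open>q y = \<langle>f y - m y, y\<rangle>\<close> vanishes at \<open>x\<close>, so its first variation
  \<open>2 \<parallel>f x - m x\<parallel>\<^sup>2\<close> in the direction \<open>f x - m x\<close> must vanish as well.\<close>
lemma selfadjoint_min_quadratic_form_eigenvector:
  fixes f :: "'a::real_inner \<Rightarrow> 'a"
  assumes lin: "linear f" and sym: "\<And>y z. inner (f y) z = inner y (f z)"
    and min: "\<And>y. m * (norm y)\<^sup>2 \<le> inner (f y) y"
    and attained: "inner (f x) x = m * (norm x)\<^sup>2"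
  shows "f x = m *\<^sub>R x"
proof -
  define g where "g y = f y - m *\<^sub>R y" for y
  define v where "v = g x"
  have g_lin: "g (y + t *\<^sub>R z) = g y + t *\<^sub>R g z" for y z t
    unfolding g_def by (simp add: linear_add[OF lin] linear_scale[OF lin] algebra_simps)
  have g_sym: "inner (g y) z = inner y (g z)" for y z
    unfolding g_def by (simp add: inner_diff_left inner_diff_right sym)
  have g_nonneg: "0 \<le> inner (g y) y" for y
    using min[of y] by (simp add: g_def inner_diff_left power2_norm_eq_inner)
  have "0 \<le> 2 * t * inner v v + t\<^sup>2 * inner (g v) v" for t
  proof -
    have "inner (g x) x = 0"
      using attained by (simp add: g_def inner_diff_left power2_norm_eq_inner)
    moreover have "inner (g v) x = inner v v"
      by (simp add: g_sym v_def)
    ultimately have "inner (g (x + t *\<^sub>R v)) (x + t *\<^sub>R v) = 2 * t * inner v v + t\<^sup>2 * inner (g v) v"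
      by (simp add: g_lin v_def power2_eq_square algebra_simps)
    then show ?thesis
      using g_nonneg by metis
  qed
  then have "inner v v = 0"
    by (rule linear_coeff_zero_if_quadratic_nonneg)
  then show ?thesis
    by (simp add: v_def g_def)
qed

text \<open>The minimiser \<open>x\<close> of \<open>\<parallel>M x\<parallel>\<close> on the unit sphere is an eigenvector of \<open>M\<^sup>2\<close> for
  \<open>s\<^sup>2\<close>, \<open>s = \<sigma>\<^sub>m\<^sub>i\<^sub>n(M)\<close>; then \<open>M x + s x\<close> is an eigenvector of \<open>M\<close> for \<open>s\<close>, or else \<open>x\<close>
  itself is one for \<open>-s\<close>.\<close>
lemma hermitian_unit_eigenvector_sigma_min:
  assumes "hermitian M"
  obtains x l where "norm x = 1" "M *v x = l *\<^sub>R x" "\<bar>l\<bar> = sigma_min M"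
proof -
  define s where "s = sigma_min M"
  obtain x where x: "norm x = 1" "norm (M *v x) = s"
    using sigma_min_attained s_def by metis
  have s: "0 \<le> s"
    using x(2) by auto
  have MM_inner: "inner (M *v (M *v y)) z = inner (M *v y) (M *v z)" for y z
    using hermitian_inner_mult_vector[OF assms] by simp
  have MM: "M *v (M *v x) = s\<^sup>2 *\<^sub>R x"
  proof (rule selfadjoint_min_quadratic_form_eigenvector)
    show "linear (\<lambda>y. M *v (M *v y))"
      by (simp add: linear_compose[unfolded o_def])
    show "inner (M *v (M *v y)) z = inner y (M *v (M *v z))" for y z
      using hermitian_inner_mult_vector[OF assms] by simp
    show "s\<^sup>2 * (norm y)\<^sup>2 \<le> inner (M *v (M *v y)) y" for y
      using sigma_min_mult_norm_le[of M y] s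
      by (simp add: MM_inner power2_norm_eq_inner[symmetric] s_def power_mult_distrib[symmetric] power_mono)
    show "inner (M *v (M *v x)) x = s\<^sup>2 * (norm x)\<^sup>2"
      by (simp add: MM_inner power2_norm_eq_inner[symmetric] x)
  qed
  show ?thesis
  proof (cases "M *v x + s *\<^sub>R x = 0")
    case True
    then have "M *v x = (- s) *\<^sub>R x"
      by (simp add: eq_neg_iff_add_eq_0)
    with x s show ?thesis
      using that[of x "- s"] s_def by simp
  next
    case False
    define y where "y = M *v x + s *\<^sub>R x"
    have "M *v y = s *\<^sub>R y"
      by (simp add: y_def linear_scale MM power2_eq_square algebra_simps)
    then have "M *v ((1 / norm y) *\<^sub>R y) = s *\<^sub>R ((1 / norm y) *\<^sub>R y)"
      by (simp add: linear_scale)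
    with False s show ?thesis
      using that[of "(1 / norm y) *\<^sub>R y" s] s_def by (simp add: y_def)
  qed
qed

definition cmat_outer :: "complex^'n \<Rightarrow> complex^'n^'n" where
  "cmat_outer x = (\<chi> i j. x$i * cnj (x$j))"

lemma hermitian_cmat_outer: "hermitian (cmat_outer x)"
  by (simp add: hermitian_iff cmat_outer_def)

lemma cmat_outer_mult_vector: "cmat_outer x *v u = (\<Sum>j\<in>UNIV. cnj (x$j) * u$j) *s x"
  by (simp add: vec_eq_iff cmat_outer_def matrix_vector_mult_def sum_distrib_left mult_ac)

lemma cmat_outer_mult_vector_self: "norm x = 1 \<Longrightarrow> cmat_outer x *v x = x"
proof -
  assume "norm x = 1"
  have "(\<Sum>j\<in>UNIV. cnj (x$j) * x$j) = of_real ((norm x)\<^sup>2)"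
    by (simp add: norm_vec_def L2_set_def sum_nonneg complex_norm_square[unfolded of_real_power] mult.commute)
  with \<open>norm x = 1\<close> show ?thesis
    by (simp add: cmat_outer_mult_vector)
qed

lemma cmod_sum_cnj_mult_le: "cmod (\<Sum>j\<in>UNIV. cnj (x$j) * u$j) \<le> norm x * norm (u::complex^'n)"
proof -
  have "cmod (\<Sum>j\<in>UNIV. cnj (x$j) * u$j) \<le> (\<Sum>j\<in>UNIV. cmod (x$j) * cmod (u$j))"
    by (rule order_trans[OF norm_sum]) (simp add: norm_mult)
  also have "\<dots> = inner (\<chi> j. cmod (x$j)) (\<chi> j. cmod (u$j))"
    by (simp add: inner_vec_def)
  also have "\<dots> \<le> norm (\<chi> j. cmod (x$j)) * norm (\<chi> j. cmod (u$j))"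
    by (rule norm_cauchy_schwarz)
  also have "\<dots> = norm x * norm u"
    by (simp add: norm_vec_def)
  finally show ?thesis .
qed

lemma norm2_cmat_outer_le: "norm x = 1 \<Longrightarrow> norm2 (cmat_outer x) \<le> 1"
  unfolding norm2_def
proof (rule onorm_le)
  fix u
  assume "norm x = 1"
  then show "norm (cmat_outer x *v u) \<le> 1 * norm u"
    using cmod_sum_cnj_mult_le[of x u] by (simp add: cmat_outer_mult_vector norm_vector_smult)
qed

lemma mult_add_le_sqrt_sum_squares:
  fixes c e f :: real
  shows "c * f + e \<le> sqrt (1 + c\<^sup>2) * sqrt (f\<^sup>2 + e\<^sup>2)"
proof -
  have "(c * f + e)\<^sup>2 + (c * e - f)\<^sup>2 = (1 + c\<^sup>2) * (f\<^sup>2 + e\<^sup>2)"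
    by (simp add: power2_eq_square algebra_simps)
  then have "(c * f + e)\<^sup>2 \<le> (1 + c\<^sup>2) * (f\<^sup>2 + e\<^sup>2)"
    by (metis le_add_same_cancel1 zero_le_power2)
  then show ?thesis
    by (simp add: real_le_rsqrt real_sqrt_mult[symmetric])
qed

lemma crawford_le: "norm x = 1 \<Longrightarrow> crawford A B \<le> cmod (qform (A + cmat_scale \<i> B) x)"
  unfolding crawford_def by (rule cInf_lower) (auto intro!: bdd_belowI[of _ 0])

lemma cmod_qform_pair_le:
  assumes "hermitian E" "hermitian F" "norm x = 1"
  shows "cmod (qform E x + \<i> * qform F x) \<le> sqrt ((norm2 E)\<^sup>2 + (norm2 F)\<^sup>2)"
proof -
  have "qform E x + \<i> * qform F x = Complex (inner (E *v x) x) (inner (F *v x) x)"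
    by (simp add: qform_hermitian assms complex_eq_iff)
  then have "cmod (qform E x + \<i> * qform F x) = sqrt ((inner (E *v x) x)\<^sup>2 + (inner (F *v x) x)\<^sup>2)"
    by (simp add: complex_norm)
  also have "\<dots> \<le> sqrt ((norm2 E)\<^sup>2 + (norm2 F)\<^sup>2)"
    using abs_inner_mult_vector_le_norm2[OF assms(3)]
    by (intro real_sqrt_le_mono add_mono power2_le_iff_abs_le[THEN iffD2] norm2_nonneg)
  finally show ?thesis .
qed

lemma perturbed_pencil_eigenvalue_real:
  assumes "hermitian A" "hermitian B" "hermitian E" "hermitian F" "u \<noteq> 0"
    and eq: "(A + E) *v u = cmat_scale z (B + F) *v u"
    and small: "sqrt ((norm2 E)\<^sup>2 + (norm2 F)\<^sup>2) < crawford A B"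
  shows "z \<in> \<real>"
proof -
  define x where "x = (1 / norm u) *\<^sub>R u"
  have x: "norm x = 1"
    using \<open>u \<noteq> 0\<close> by (simp add: x_def)
  have eqx: "(A + E) *v x = cmat_scale z (B + F) *v x"
    by (simp add: x_def linear_scale eq)
  define a where "a = qform (A + E) x"
  define b where "b = qform (B + F) x"
  have ab: "a = z * b"
    unfolding a_def b_def qform_cmat_scale[symmetric] by (simp add: qform_eq_sum eqx)
  have real: "a \<in> \<real>" "b \<in> \<real>"
    unfolding a_def b_def using assms(1-4) by (simp_all add: qform_hermitian hermitian_add)
  have "qform (A + cmat_scale \<i> B) x = (a + \<i> * b) - (qform E x + \<i> * qform F x)"
    by (simp add: a_def b_def qform_add qform_cmat_scale algebra_simps)
  then have "crawford A B \<le> cmod (a + \<i> * b) + cmod (qform E x + \<i> * qform F x)"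
    using crawford_le[OF x, of A B] norm_triangle_ineq4 by (metis order_trans)
  with small cmod_qform_pair_le[OF assms(3,4) x] have "a + \<i> * b \<noteq> 0"
    by auto
  with ab have "b \<noteq> 0"
    by auto
  with ab real show ?thesis
    by (metis Reals_divide nonzero_mult_div_cancel_right)
qed

lemma sigma_min_perturbed_pencil_le:
  assumes "u \<noteq> 0" and eq: "(A + E) *v u = cmat_scale z (B + F) *v u"
    and size: "sqrt ((norm2 E)\<^sup>2 + (norm2 F)\<^sup>2) \<le> \<epsilon>"
  shows "sigma_min (A - cmat_scale z B) \<le> \<epsilon> * sqrt (1 + (cmod z)\<^sup>2)"
proof -
  have "(A - cmat_scale z B) *v u = z *s (F *v u) - E *v u"
    using eq by (simp add: vec_eq_iff cmat_scale_mult_vector algebra_simps)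
  then have "sigma_min (A - cmat_scale z B) * norm u \<le> cmod z * norm (F *v u) + norm (E *v u)"
    using sigma_min_mult_norm_le[of "A - cmat_scale z B" u]
      norm_triangle_ineq4[of "z *s (F *v u)" "E *v u"] by (simp add: norm_vector_smult)
  also have "\<dots> \<le> (cmod z * norm2 F + norm2 E) * norm u"
    using norm_mult_vector_le_norm2[of F u] norm_mult_vector_le_norm2[of E u]
    by (simp add: distrib_right mult.assoc add_mono mult_left_mono)
  finally have "sigma_min (A - cmat_scale z B) \<le> cmod z * norm2 F + norm2 E"
    using \<open>u \<noteq> 0\<close> by simp
  also have "\<dots> \<le> sqrt (1 + (cmod z)\<^sup>2) * sqrt ((norm2 F)\<^sup>2 + (norm2 E)\<^sup>2)"
    by (rule mult_add_le_sqrt_sum_squares)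
  also have "\<dots> \<le> sqrt (1 + (cmod z)\<^sup>2) * \<epsilon>"
    using size by (simp add: add.commute mult_left_mono)
  finally show ?thesis
    by (simp add: mult.commute)
qed

lemma real_eigenvalue_in_sym_pseudospectrum:
  assumes x: "norm x = 1" and eig: "(A - cmat_scale (of_real r) B) *v x = l *\<^sub>R x"
    and l: "\<bar>l\<bar> \<le> \<epsilon> * sqrt (1 + r\<^sup>2)"
  shows "of_real r \<in> sym_pseudospectrum \<epsilon> A B"
proof -
  define s where "s = sqrt (1 + r\<^sup>2)"
  have s: "s > 0" "s\<^sup>2 = 1 + r\<^sup>2"
    unfolding s_def by (simp_all add: add_pos_nonneg)
  define c where "c = l / s\<^sup>2"
  define E where "E = cmat_scale (of_real (- c)) (cmat_outer x)"
  define F where "F = cmat_scale (of_real (r * c)) (cmat_outer x)"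
  have herm: "hermitian E" "hermitian F"
    unfolding E_def F_def by (intro hermitian_cmat_scale_real hermitian_cmat_outer)+
  have "norm2 (cmat_scale (of_real t) (cmat_outer x)) \<le> \<bar>t\<bar>" for t
    using norm2_cmat_scale_le[of "of_real t" "cmat_outer x"] norm2_cmat_outer_le[OF x]
    by (metis abs_ge_zero mult_left_le norm_of_real order_trans)
  from this[of "- c"] this[of "r * c"] have "norm2 E \<le> \<bar>c\<bar>" "norm2 F \<le> \<bar>r * c\<bar>"
    by (simp_all add: E_def F_def)
  then have "sqrt ((norm2 E)\<^sup>2 + (norm2 F)\<^sup>2) \<le> sqrt (c\<^sup>2 + (r * c)\<^sup>2)"
    by (intro real_sqrt_le_mono add_mono power2_mono) (auto simp: norm2_nonneg)
  also have "c\<^sup>2 + (r * c)\<^sup>2 = c\<^sup>2 * s\<^sup>2"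
    by (simp add: s(2) algebra_simps)
  also have "\<dots> = (l / s)\<^sup>2"
    using s(1) by (simp add: c_def field_simps)
  also have "sqrt \<dots> = \<bar>l\<bar> / s"
    using s(1) by simp
  also have "\<dots> \<le> \<epsilon>"
    using l s by (simp add: divide_le_eq s_def)
  finally have size: "sqrt ((norm2 E)\<^sup>2 + (norm2 F)\<^sup>2) \<le> \<epsilon>" .
  have "(E *v x)$i = - c * x$i" "(F *v x)$i = r * c * x$i" for i
    by (simp_all add: E_def F_def cmat_scale_mult_vector cmat_outer_mult_vector_self[OF x])
  moreover have "(A *v x)$i - r * (B *v x)$i = l * x$i" for i
    using eig[THEN arg_cong[where f = "\<lambda>v. v$i"]]
    by (simp add: cmat_scale_mult_vector matrix_vector_mult_diff_rdistrib) (simp add: scaleR_conv_of_real)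
  moreover have "l = c * (1 + r\<^sup>2)"
    using s(1) by (simp add: c_def flip: s(2))
  ultimately have eq: "(A + E) *v x = cmat_scale (of_real r) (B + F) *v x"
    by (simp add: vec_eq_iff cmat_scale_mult_vector algebra_simps power2_eq_square)
  have "x \<noteq> 0"
    using x by auto
  with herm size eq show ?thesis
    unfolding sym_pseudospectrum_def mem_Collect_eq by (intro exI conjI)
qed

theorem lemma2p5:
  fixes A B :: "complex^'n^'n" and \<epsilon> :: real
  assumes "definite_pencil A B"
    and "0 < \<epsilon>" and "\<epsilon> < crawford A B"
  shows "sym_pseudospectrum \<epsilon> A B =
    {z. sigma_min (A - cmat_scale z B) \<le> \<epsilon> * sqrt (1 + (cmod z)\<^sup>2)} \<inter> \<real>"
proof (intro equalityI subsetI)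
  fix z
  assume "z \<in> sym_pseudospectrum \<epsilon> A B"
  then obtain E F u where pert: "hermitian E" "hermitian F" "u \<noteq> 0"
    and size: "sqrt ((norm2 E)\<^sup>2 + (norm2 F)\<^sup>2) \<le> \<epsilon>"
    and eq: "(A + E) *v u = cmat_scale z (B + F) *v u"
    unfolding sym_pseudospectrum_def by blast
  have "hermitian A" "hermitian B"
    using assms(1) by (simp_all add: definite_pencil_def)
  then have "z \<in> \<real>"
    by (rule perturbed_pencil_eigenvalue_real[OF _ _ pert eq]) (use size assms(3) in linarith)
  moreover have "sigma_min (A - cmat_scale z B) \<le> \<epsilon> * sqrt (1 + (cmod z)\<^sup>2)"
    using pert(3) eq size by (rule sigma_min_perturbed_pencil_le)
  ultimately show "z \<in> {z. sigma_min (A - cmat_scale z B) \<le> \<epsilon> * sqrt (1 + (cmod z)\<^sup>2)} \<inter> \<real>"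
    by simp
next
  fix z
  assume z: "z \<in> {z. sigma_min (A - cmat_scale z B) \<le> \<epsilon> * sqrt (1 + (cmod z)\<^sup>2)} \<inter> \<real>"
  then obtain r where r: "z = of_real r"
    using Reals_cases by blast
  have "hermitian (A - cmat_scale (of_real r) B)"
    using assms(1) by (simp add: definite_pencil_def hermitian_diff hermitian_cmat_scale_real)
  then obtain x l where x: "norm x = 1" and eig: "(A - cmat_scale (of_real r) B) *v x = l *\<^sub>R x"
    and l: "\<bar>l\<bar> = sigma_min (A - cmat_scale (of_real r) B)"
    by (rule hermitian_unit_eigenvector_sigma_min)
  have "\<bar>l\<bar> \<le> \<epsilon> * sqrt (1 + r\<^sup>2)"
    using z unfolding l r by simp
  then show "z \<in> sym_pseudospectrum \<epsilon> A B"
    unfolding r by (rule real_eigenvalue_in_sym_pseudospectrum[OF x eig])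
qed

end
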